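(* Let $\overline{u}$ be the optimal control and $\overline{p}$ the optimal adjoint state of the continuous problem described in the context, and let $\tilde u_h$ be the modified interpolant of $\overline{u}$ defined in the context. Then for sufficiently small $h>0$, $$(\overline{p}+\beta\overline{u},\,u-\tilde u_h)_{L^2(\Omega)}\ge 0\qquad\forall u\in U_{ad}.$$
   Context: $\Omega\subset\mathbb{R}^2$ is a bounded convex polygonal domain, $\beta>0$, $y_d\in L^2(\Omega)$, $u_a<u_b$ are real constants, $U_{ad}:=\{v\in L^2(\Omega):u_a\le v\le u_b\text{ a.e.}\}$. The optimal control problem is: minimize $\frac12\|y-y_d\|^2_{L^2(\Omega)}+\frac\beta2\|u\|^2_{L^2(\Omega)}$ over $(y,u)\in H^1_0(\Omega)\times U_{ad}$ subject to $-\Delta y=u$ in $\Omega$, $y=0$ on $\partial\Omega$. Its unique solution $(\overline{y},\overline{u})$ together with the adjoint state $\overline{p}\in H^1_0(\Omega)$ (weak solution of $-\Delta\overline{p}=\overline{y}-y_d$, $\overline{p}=0$ on $\partial\Omega$) satisfies $(\overline{p}+\beta\overline{u},u-\overline{u})_{L^2(\Omega)}\ge0$ for all $u\in U_{ad}$. The optimal control satisfies $\overline{u}\in W^{1,\infty}(\Omega)$ (in particular it is continuous on $\overline\Omega$). $\mathcal{T}_h$ is a shape-regular simplicial triangulation of $\Omega$ with mesh size $h$, $U_{ad,h}^1:=\{v\in U_{ad}: v|_T\in\mathbb{P}_1(T)\ \forall T\}$, and $\Pi_h^1:U_{ad}\to U^1_{ad,h}$ is the standard elementwise linear (nodal) interpolation.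 It is assumed (for $h$ small enough) that no $T\in\mathcal{T}_h$ satisfies both $\min_{\overline T}\overline{u}=u_a$ and $\max_{\overline T}\overline{u}=u_b$. Then $\tilde u_h\in U_{ad,h}^1$ is defined elementwise by $\tilde u_h|_T=u_a$ if $\min_{\overline T}\overline{u}=u_a$, $\tilde u_h|_T=u_b$ if $\max_{\overline T}\overline{u}=u_b$, and $\tilde u_h|_T=\Pi_h^1(\overline{u})|_T$ otherwise. *)

theory Defs
  imports "HOL-Analysis.Analysis"
begin

type_synonym pt = "real^2"

definition L2 :: "pt set \<Rightarrow> (pt \<Rightarrow> real) \<Rightarrow> bool" where
  "L2 \<Omega> f \<longleftrightarrow> f \<in> borel_measurable (lebesgue_on \<Omega>) \<and>
      integrable (lebesgue_on \<Omega>) (\<lambda>x. (f x)\<^sup>2)"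

definition l2inner :: "pt set \<Rightarrow> (pt \<Rightarrow> real) \<Rightarrow> (pt \<Rightarrow> real) \<Rightarrow> real" where
  "l2inner \<Omega> f g = (\<integral>x. f x * g x \<partial>lebesgue_on \<Omega>)"

definition l2normsq :: "pt set \<Rightarrow> (pt \<Rightarrow> real) \<Rightarrow> real" where
  "l2normsq \<Omega> f = (\<integral>x. (f x)\<^sup>2 \<partial>lebesgue_on \<Omega>)"

definition pderiv_cl :: "2 \<Rightarrow> (pt \<Rightarrow> real) \<Rightarrow> pt \<Rightarrow> real" where
  "pderiv_cl i f x = frechet_derivative f (at x) (axis i 1)"

fun Ck :: "nat \<Rightarrow> (pt \<Rightarrow> real) \<Rightarrow> bool" where
  "Ck 0 f = continuous_on UNIV f"
| "Ck (Suc k) f = (continuous_on UNIV f \<and> f differentiable_on UNIV \<and>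
       (\<forall>i. Ck k (pderiv_cl i f)))"

definition smooth :: "(pt \<Rightarrow> real) \<Rightarrow> bool" where
  "smooth f \<longleftrightarrow> (\<forall>k. Ck k f)"

definition test_fun :: "pt set \<Rightarrow> (pt \<Rightarrow> real) \<Rightarrow> bool" where
  "test_fun \<Omega> \<phi> \<longleftrightarrow> smooth \<phi> \<and> compact (closure {x. \<phi> x \<noteq> 0})
      \<and> closure {x. \<phi> x \<noteq> 0} \<subseteq> \<Omega>"

definition weak_deriv :: "pt set \<Rightarrow> 2 \<Rightarrow> (pt \<Rightarrow> real) \<Rightarrow> (pt \<Rightarrow> real) \<Rightarrow> bool" where
  "weak_deriv \<Omega> i f g \<longleftrightarrow> L2 \<Omega> f \<and> L2 \<Omega> g \<and>
     (\<forall>\<phi>. test_fun \<Omega> \<phi> \<longrightarrow> l2inner \<Omega> f (pderiv_cl i \<phi>) = - l2inner \<Omega> g \<phi>)"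

definition wgrad :: "pt set \<Rightarrow> 2 \<Rightarrow> (pt \<Rightarrow> real) \<Rightarrow> pt \<Rightarrow> real" where
  "wgrad \<Omega> i f = (SOME g. weak_deriv \<Omega> i f g)"

definition H1 :: "pt set \<Rightarrow> (pt \<Rightarrow> real) \<Rightarrow> bool" where
  "H1 \<Omega> f \<longleftrightarrow> L2 \<Omega> f \<and> (\<forall>i. \<exists>g. weak_deriv \<Omega> i f g)"

text \<open>H1_0 = closure of the test functions in the H1 norm.\<close>
definition H10 :: "pt set \<Rightarrow> (pt \<Rightarrow> real) \<Rightarrow> bool" where
  "H10 \<Omega> f \<longleftrightarrow> H1 \<Omega> f \<and>
     (\<exists>\<phi>s :: nat \<Rightarrow> pt \<Rightarrow> real. (\<forall>n. test_fun \<Omega> (\<phi>s n)) \<and>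
        (\<lambda>n. l2normsq \<Omega> (\<lambda>x. \<phi>s n x - f x)) \<longlonglongrightarrow> 0 \<and>
        (\<forall>i. (\<lambda>n. l2normsq \<Omega> (\<lambda>x. pderiv_cl i (\<phi>s n) x - wgrad \<Omega> i f x)) \<longlonglongrightarrow> 0))"

text \<open>y is the weak solution of  -Laplace y = g in Omega, y = 0 on the boundary.\<close>
definition weak_poisson :: "pt set \<Rightarrow> (pt \<Rightarrow> real) \<Rightarrow> (pt \<Rightarrow> real) \<Rightarrow> bool" where
  "weak_poisson \<Omega> g y \<longleftrightarrow> H10 \<Omega> y \<and>
     (\<forall>v. H10 \<Omega> v \<longrightarrow>
        (\<Sum>i\<in>UNIV. l2inner \<Omega> (wgrad \<Omega> i y) (wgrad \<Omega> i v)) = l2inner \<Omega> g v)"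

definition Uad :: "pt set \<Rightarrow> real \<Rightarrow> real \<Rightarrow> (pt \<Rightarrow> real) set" where
  "Uad \<Omega> ua ub = {v. L2 \<Omega> v \<and> (AE x in lebesgue_on \<Omega>. ua \<le> v x \<and> v x \<le> ub)}"

definition cost :: "pt set \<Rightarrow> (pt \<Rightarrow> real) \<Rightarrow> real \<Rightarrow> (pt \<Rightarrow> real) \<Rightarrow> (pt \<Rightarrow> real) \<Rightarrow> real" where
  "cost \<Omega> yd \<beta> y u = l2normsq \<Omega> (\<lambda>x. y x - yd x) / 2 + \<beta> / 2 * l2normsq \<Omega> u"

definition optimal_pair ::
  "pt set \<Rightarrow> (pt \<Rightarrow> real) \<Rightarrow> real \<Rightarrow> real \<Rightarrow> real \<Rightarrow> (pt \<Rightarrow> real) \<Rightarrow> (pt \<Rightarrow> real) \<Rightarrow> bool" where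
  "optimal_pair \<Omega> yd \<beta> ua ub yb ub' \<longleftrightarrow>
     ub' \<in> Uad \<Omega> ua ub \<and> weak_poisson \<Omega> ub' yb \<and>
     (\<forall>y u. u \<in> Uad \<Omega> ua ub \<longrightarrow> weak_poisson \<Omega> u y \<longrightarrow>
        cost \<Omega> yd \<beta> yb ub' \<le> cost \<Omega> yd \<beta> y u)"

definition convex_polygonal_domain :: "pt set \<Rightarrow> bool" where
  "convex_polygonal_domain \<Omega> \<longleftrightarrow> open \<Omega> \<and> \<Omega> \<noteq> {} \<and> bounded \<Omega> \<and> convex \<Omega> \<and>
     (\<exists>P. finite P \<and> \<Omega> = interior (convex hull P))"

text \<open>A simplicial triangulation is given by the vertex sets of its (closed) triangles.\<close>
definition triangulation :: "pt set \<Rightarrow> pt set set \<Rightarrow> bool" where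
  "triangulation \<Omega> \<T> \<longleftrightarrow> finite \<T> \<and>
     (\<forall>V\<in>\<T>. card V = 3 \<and> \<not> affine_dependent V) \<and>
     \<Union>((\<lambda>V. convex hull V) ` \<T>) = closure \<Omega> \<and>
     (\<forall>V\<in>\<T>. \<forall>W\<in>\<T>. convex hull V \<inter> convex hull W = convex hull (V \<inter> W))"

definition meshsize :: "pt set set \<Rightarrow> real" where
  "meshsize \<T> = Max ((\<lambda>V. diameter (convex hull V)) ` \<T>)"

definition inradius :: "pt set \<Rightarrow> real" where
  "inradius T = Sup {r. \<exists>c. ball c r \<subseteq> T}"

definition shape_regular_family :: "(real \<Rightarrow> pt set set) \<Rightarrow> bool" where
  "shape_regular_family Tr \<longleftrightarrow> (\<exists>\<sigma>>0. \<forall>h>0. \<forall>V\<in>Tr h.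
      diameter (convex hull V) \<le> \<sigma> * inradius (convex hull V))"

definition P1interp :: "pt set \<Rightarrow> (pt \<Rightarrow> real) \<Rightarrow> pt \<Rightarrow> real" where
  "P1interp V f = (THE l. (\<exists>a b. \<forall>z. l z = a \<bullet> z + b) \<and> (\<forall>v\<in>V. l v = f v))"

end

theory Submission
  imports Defs
begin

text \<open>The variational inequality for box constraints holds pointwise: almost everywhere,
  ubar equals ua where pbar + \<beta> ubar is positive and ub where it is negative. On an element
  containing such a point the modified interpolant takes that same bound, because no element
  attains both bounds. Hence (pbar + \<beta> ubar) (u - ut h) is nonnegative almost everywhere
  for every admissible u; element boundaries are negligible, so prescribing ut h on element
  interiors suffices.\<close>

lemma L2_integrable:
  assumes "L2 \<Omega> f" "\<Omega> \<in> lmeasurable"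
  shows "integrable (lebesgue_on \<Omega>) f"
  using finite_measure.square_integrable_imp_integrable[OF finite_measure_lebesgue_on[OF assms(2)]]
    assms(1) unfolding L2_def by blast

lemma bounded_measurable_in_Uad:
  assumes "\<Omega> \<in> lmeasurable" and v: "v \<in> borel_measurable (lebesgue_on \<Omega>)"
    and bnd: "\<forall>x\<in>\<Omega>. ua \<le> v x \<and> v x \<le> ub"
  shows "v \<in> Uad \<Omega> ua ub"
proof -
  interpret finite_measure "lebesgue_on \<Omega>"
    using assms(1) by (rule finite_measure_lebesgue_on)
  have "integrable (lebesgue_on \<Omega>) (\<lambda>x. (v x)\<^sup>2)"
  proof (rule Bochner_Integration.integrable_bound[where f="\<lambda>_. ua\<^sup>2 + ub\<^sup>2"])
    show "AE x in lebesgue_on \<Omega>. norm ((v x)\<^sup>2) \<le> norm (ua\<^sup>2 + ub\<^sup>2)"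
    proof (rule AE_I2)
      fix x assume "x \<in> space (lebesgue_on \<Omega>)"
      then have lo: "ua \<le> v x" and hi: "v x \<le> ub" using bnd by auto
      have "(v x)\<^sup>2 \<le> ua\<^sup>2 + ub\<^sup>2"
      proof (cases "0 \<le> v x")
        case True
        then have "(v x)\<^sup>2 \<le> ub\<^sup>2" using hi by (intro power_mono)
        then show ?thesis by (simp add: add_increasing)
      next
        case False
        then have "(- v x)\<^sup>2 \<le> (- ua)\<^sup>2" using lo by (intro power_mono) auto
        then show ?thesis by (simp add: add_increasing2)
      qed
      then show "norm ((v x)\<^sup>2) \<le> norm (ua\<^sup>2 + ub\<^sup>2)" by simp
    qed
  qed (use v in simp_all)
  then show ?thesis
    using v bnd unfolding Uad_def L2_def by (auto intro: AE_I2)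
qed

lemma AE_in_closed_imp_in_closed_on_open:
  fixes f :: "'a::euclidean_space \<Rightarrow> 'b::topological_space"
  assumes "open S" "continuous_on S f" "closed C" "AE x in lebesgue_on S. f x \<in> C"
  shows "f ` S \<subseteq> C"
proof (rule ccontr)
  let ?B = "S \<inter> f -` (- C)"
  assume "\<not> f ` S \<subseteq> C"
  then have "?B \<noteq> {}" by auto
  moreover have "open ?B"
    using continuous_open_preimage[OF assms(2,1)] assms(3) by (simp add: open_Compl)
  moreover have "negligible ?B"
  proof -
    have "AE x in lebesgue. x \<in> S \<longrightarrow> f x \<in> C"
      using assms(4) AE_restrict_space_iff[of S lebesgue] assms(1) by auto
    then have "?B \<in> null_sets lebesgue"
      using AE_iff_null[of lebesgue "\<lambda>x. x \<in> S \<longrightarrow> f x \<in> C"] \<open>open ?B\<close>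
      by (simp add: Int_def vimage_def)
    then show ?thesis by (simp add: negligible_iff_null_sets)
  qed
  ultimately show False using open_not_negligible by blast
qed

lemma box_variational_inequality_AE:
  fixes g u :: "'a \<Rightarrow> real"
  assumes g: "integrable M g" and u[measurable]: "u \<in> borel_measurable M"
    and u_box: "\<forall>x\<in>space M. a \<le> u x \<and> u x \<le> b"
    and VI: "\<And>v. v \<in> borel_measurable M \<Longrightarrow> \<forall>x\<in>space M. a \<le> v x \<and> v x \<le> b \<Longrightarrow>
               0 \<le> (\<integral>x. g x * (v x - u x) \<partial>M)"
  shows "AE x in M. (0 < g x \<longrightarrow> u x = a) \<and> (g x < 0 \<longrightarrow> u x = b)"
proof -
  have [measurable]: "g \<in> borel_measurable M" using g by simp
  \<comment> \<open>a single test function, pushed to the favourable bound wherever g does not vanish\<close>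
  define v where "v x = (if 0 < g x then a else if g x < 0 then b else u x)" for x
  have v[measurable]: "v \<in> borel_measurable M" unfolding v_def by measurable
  let ?d = "\<lambda>x. - (g x * (v x - u x))"
  have d_nonneg: "\<forall>x\<in>space M. 0 \<le> ?d x"
    using u_box by (auto simp: v_def mult_nonneg_nonpos mult_nonpos_nonneg)
  have d_int: "integrable M ?d"
  proof (rule Bochner_Integration.integrable_bound[where f="\<lambda>x. g x * (b - a)"])
    show "AE x in M. norm (?d x) \<le> norm (g x * (b - a))"
      using u_box by (intro AE_I2) (auto simp: v_def abs_mult intro!: mult_left_mono)
  qed (use g in simp_all)
  have "integral\<^sup>L M ?d = 0"
    using VI[OF v] integral_nonneg_AE[of ?d M] d_nonneg u_box
    by (fastforce simp: v_def intro: AE_I2)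
  then have "AE x in M. ?d x = 0"
    using integral_nonneg_eq_0_iff_AE[OF d_int] d_nonneg by (auto intro: AE_I2)
  then show ?thesis
    by eventually_elim (auto simp: v_def split: if_splits)
qed

lemma Uad_continuous_on_closure_imp_box:
  assumes "open \<Omega>" "continuous_on (closure \<Omega>) f" "f \<in> Uad \<Omega> a b"
  shows "\<forall>x\<in>closure \<Omega>. a \<le> f x \<and> f x \<le> b"
proof -
  have "AE x in lebesgue_on \<Omega>. f x \<in> {a..b}" using assms(3) unfolding Uad_def by simp
  moreover have "continuous_on \<Omega> f" using assms(2) closure_subset by (rule continuous_on_subset)
  ultimately have "f ` \<Omega> \<subseteq> {a..b}"
    using AE_in_closed_imp_in_closed_on_open[OF assms(1)] by blast
  then show ?thesis
    using image_closure_subset[OF assms(2) closed_atLeastAtMost] by (simp add: image_subset_iff)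
qed

lemma Uad_variational_inequality_AE:
  assumes \<Omega>: "\<Omega> \<in> lmeasurable" and g: "integrable (lebesgue_on \<Omega>) g"
    and f: "f \<in> Uad \<Omega> a b" and f_box: "\<forall>x\<in>\<Omega>. a \<le> f x \<and> f x \<le> b"
    and VI: "\<forall>v\<in>Uad \<Omega> a b. l2inner \<Omega> g (\<lambda>x. v x - f x) \<ge> 0"
  shows "AE x in lebesgue_on \<Omega>. (0 < g x \<longrightarrow> f x = a) \<and> (g x < 0 \<longrightarrow> f x = b)"
proof (rule box_variational_inequality_AE[OF g])
  show "f \<in> borel_measurable (lebesgue_on \<Omega>)" using f unfolding Uad_def L2_def by simp
  show "\<forall>x\<in>space (lebesgue_on \<Omega>). a \<le> f x \<and> f x \<le> b" using f_box by simp
  fix v assume "v \<in> borel_measurable (lebesgue_on \<Omega>)"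
    and "\<forall>x\<in>space (lebesgue_on \<Omega>). a \<le> v x \<and> v x \<le> b"
  then have "v \<in> Uad \<Omega> a b" using \<Omega> by (intro bounded_measurable_in_Uad) auto
  then show "0 \<le> (\<integral>x. g x * (v x - f x) \<partial>lebesgue_on \<Omega>)"
    using VI unfolding l2inner_def by blast
qed

lemma AE_in_interior_of_convex_hull_cover:
  fixes T :: "'a::euclidean_space set set"
  assumes "finite T" "\<forall>V\<in>T. finite V" "S \<subseteq> (\<Union>V\<in>T. convex hull V)" "S \<in> sets lebesgue"
  shows "AE x in lebesgue_on S. \<exists>V\<in>T. x \<in> interior (convex hull V)"
proof -
  let ?F = "\<Union>V\<in>T. frontier (convex hull V)"
  have in_interior: "\<exists>V\<in>T. x \<in> interior (convex hull V)" if "x \<in> S" "x \<notin> ?F" for x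
  proof -
    obtain V where "V \<in> T" "x \<in> convex hull V" using assms(3) \<open>x \<in> S\<close> by blast
    moreover have "closed (convex hull V)"
      using assms(2) \<open>V \<in> T\<close> by (simp add: compact_imp_closed finite_imp_compact_convex_hull)
    ultimately show ?thesis using \<open>x \<notin> ?F\<close> by (auto simp: frontier_def)
  qed
  have "negligible ?F"
    using assms(1) by (auto intro!: negligible_Union negligible_convex_frontier)
  then have "AE x in lebesgue. x \<notin> ?F"
    by (intro AE_not_in) (simp add: negligible_iff_null_sets)
  then have "AE x in lebesgue. x \<in> S \<longrightarrow> x \<notin> ?F"
    by eventually_elim simp
  then have "AE x in lebesgue_on S. x \<notin> ?F"
    using AE_restrict_space_iff[of S lebesgue] assms(4) by simp
  moreover have "AE x in lebesgue_on S. x \<in> S" by (rule AE_I2) simp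
  ultimately show ?thesis by eventually_elim (use in_interior in blast)
qed

lemma modified_interpolant_at_active_bounds:
  fixes f :: "'a \<Rightarrow> real"
  assumes x: "x \<in> K" and box: "\<forall>z\<in>K. a \<le> f z \<and> f z \<le> b"
    and not_both: "\<not> ((INF z\<in>K. f z) = a \<and> (SUP z\<in>K. f z) = b)"
    and w: "w = (if (INF z\<in>K. f z) = a then a else if (SUP z\<in>K. f z) = b then b else p)"
  shows "(f x = a \<longrightarrow> w = a) \<and> (f x = b \<longrightarrow> w = b)"
proof (intro conjI impI)
  assume "f x = a"
  then have "(INF z\<in>K. f z) = a" using x box by (intro cInf_eq_minimum) auto
  then show "w = a" using w by simp
next
  assume "f x = b"
  then have "(SUP z\<in>K. f z) = b" using x box by (intro cSup_eq_maximum) auto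
  then show "w = b" using w not_both by auto
qed

lemma l2inner_nonneg_modified_interpolant:
  assumes \<Omega>: "\<Omega> \<in> lmeasurable" and T: "triangulation \<Omega> T"
    and sign: "AE x in lebesgue_on \<Omega>. (0 < g x \<longrightarrow> f x = a) \<and> (g x < 0 \<longrightarrow> f x = b)"
    and f_box: "\<forall>x\<in>closure \<Omega>. a \<le> f x \<and> f x \<le> b"
    and not_both: "\<forall>V\<in>T. \<not> ((INF z\<in>convex hull V. f z) = a \<and> (SUP z\<in>convex hull V. f z) = b)"
    and w: "\<forall>V\<in>T. \<forall>x\<in>interior (convex hull V).
        w x = (if (INF z\<in>convex hull V. f z) = a then a
               else if (SUP z\<in>convex hull V. f z) = b then b
               else P1interp V f x)"
    and u: "u \<in> Uad \<Omega> a b"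
  shows "0 \<le> l2inner \<Omega> g (\<lambda>x. u x - w x)"
proof -
  have u_box: "AE x in lebesgue_on \<Omega>. a \<le> u x \<and> u x \<le> b" using u unfolding Uad_def by simp
  have fin: "finite T" "\<forall>V\<in>T. finite V" and cover: "closure \<Omega> = (\<Union>V\<in>T. convex hull V)"
    using T unfolding triangulation_def by (auto intro: card_ge_0_finite)
  have "\<Omega> \<subseteq> (\<Union>V\<in>T. convex hull V)" using closure_subset[of \<Omega>] cover by simp
  then have "AE x in lebesgue_on \<Omega>. \<exists>V\<in>T. x \<in> interior (convex hull V)"
    using fin \<Omega> by (intro AE_in_interior_of_convex_hull_cover) auto
  then have "AE x in lebesgue_on \<Omega>. 0 \<le> g x * (u x - w x)"
    using sign u_box
  proof eventually_elim
    case (elim x)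
    then obtain V where V: "V \<in> T" and x: "x \<in> interior (convex hull V)" by blast
    have "x \<in> convex hull V" using x interior_subset by blast
    moreover have "\<forall>z\<in>convex hull V. a \<le> f z \<and> f z \<le> b" using cover V f_box by auto
    moreover have "\<not> ((INF z\<in>convex hull V. f z) = a \<and> (SUP z\<in>convex hull V. f z) = b)"
      using not_both V by blast
    moreover have "w x = (if (INF z\<in>convex hull V. f z) = a then a
                          else if (SUP z\<in>convex hull V. f z) = b then b
                          else P1interp V f x)"
      using w V x by simp
    ultimately have "(f x = a \<longrightarrow> w x = a) \<and> (f x = b \<longrightarrow> w x = b)"
      by (rule modified_interpolant_at_active_bounds)
    then show ?case using elim
      by (cases "g x" "0::real" rule: linorder_cases) (auto simp: mult_nonpos_nonpos)
  qed
  then show ?thesis unfolding l2inner_def by (rule integral_nonneg_AE)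
qed

theorem lemma3p5:
  fixes \<Omega> :: "pt set" and \<beta> ua ub :: real
    and yd yb ubar pbar :: "pt \<Rightarrow> real"
    and Tr :: "real \<Rightarrow> pt set set"
    and ut :: "real \<Rightarrow> pt \<Rightarrow> real"
  assumes dom: "convex_polygonal_domain \<Omega>"
    and beta: "\<beta> > 0"
    and yd: "L2 \<Omega> yd"
    and bounds: "ua < ub"
    and opt: "optimal_pair \<Omega> yd \<beta> ua ub yb ubar"
    and adj: "weak_poisson \<Omega> (\<lambda>x. yb x - yd x) pbar"
    and VI: "\<forall>u\<in>Uad \<Omega> ua ub. l2inner \<Omega> (\<lambda>x. pbar x + \<beta> * ubar x) (\<lambda>x. u x - ubar x) \<ge> 0"
    and ucont: "continuous_on (closure \<Omega>) ubar"
    and tri: "\<forall>h>0. triangulation \<Omega> (Tr h) \<and> meshsize (Tr h) \<le> h"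
    and shape: "shape_regular_family Tr"
    and noboth: "\<exists>h0>0. \<forall>h. 0 < h \<and> h < h0 \<longrightarrow>
        \<not> (\<exists>V\<in>Tr h. (INF x\<in>convex hull V. ubar x) = ua \<and> (SUP x\<in>convex hull V. ubar x) = ub)"
    and ut: "\<forall>h>0. \<forall>V\<in>Tr h. \<forall>x\<in>interior (convex hull V).
        ut h x = (if (INF z\<in>convex hull V. ubar z) = ua then ua
                  else if (SUP z\<in>convex hull V. ubar z) = ub then ub
                  else P1interp V ubar x)"
  shows "\<exists>h1>0. \<forall>h. 0 < h \<and> h < h1 \<longrightarrow>
           (\<forall>u\<in>Uad \<Omega> ua ub.
              l2inner \<Omega> (\<lambda>x. pbar x + \<beta> * ubar x) (\<lambda>x. u x - ut h x) \<ge> 0)"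
proof -
  let ?g = "\<lambda>x. pbar x + \<beta> * ubar x"
  have "open \<Omega>" "bounded \<Omega>" using dom unfolding convex_polygonal_domain_def by auto
  then have \<Omega>: "\<Omega> \<in> lmeasurable" by (simp add: lmeasurable_open)
  have ubar: "ubar \<in> Uad \<Omega> ua ub" using opt unfolding optimal_pair_def by simp
  have ubar_box: "\<forall>x\<in>closure \<Omega>. ua \<le> ubar x \<and> ubar x \<le> ub"
    using Uad_continuous_on_closure_imp_box[OF \<open>open \<Omega>\<close> ucont ubar] .
  have "L2 \<Omega> ubar" "L2 \<Omega> pbar"
    using ubar adj unfolding Uad_def weak_poisson_def H10_def H1_def by auto
  then have "integrable (lebesgue_on \<Omega>) ?g" using L2_integrable[OF _ \<Omega>] by simp
  then have sign: "AE x in lebesgue_on \<Omega>. (0 < ?g x \<longrightarrow> ubar x = ua) \<and> (?g x < 0 \<longrightarrow> ubar x = ub)"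
    using Uad_variational_inequality_AE[OF \<Omega> _ ubar] ubar_box closure_subset VI by blast
  obtain h0 where "h0 > 0" and noboth_h: "\<And>h. 0 < h \<Longrightarrow> h < h0 \<Longrightarrow>
      \<not> (\<exists>V\<in>Tr h. (INF x\<in>convex hull V. ubar x) = ua \<and> (SUP x\<in>convex hull V. ubar x) = ub)"
    using noboth by blast
  show ?thesis
  proof (intro exI[of _ h0] conjI \<open>h0 > 0\<close> allI impI ballI)
    fix h u assume "0 < h \<and> h < h0" and "u \<in> Uad \<Omega> ua ub"
    then show "0 \<le> l2inner \<Omega> ?g (\<lambda>x. u x - ut h x)"
      using l2inner_nonneg_modified_interpolant[OF \<Omega> _ sign ubar_box] tri ut noboth_h[of h]
      by blast
  qed
qed

end
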